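(* Let $T\ge1$, $\mathcal{X}_t=\mathbb{R}^{d_t}$ for $t\in\{0,\dots,T\}$, and $\mathcal{A}_1,\dots,\mathcal{A}_T$ finite sets. On a probability space, let $X_0$ be $\mathcal{X}_0$-valued, let $X_s(a_{1:s})$ be $\mathcal{X}_s$-valued random variables for $s\in\{1,\dots,T\}$, $a_{1:s}\in\mathcal{A}_{1:s}$, let $A_s$ be $\mathcal{A}_s$-valued random variables for $s\in\{1,\dots,T\}$, and fix $t\in\{1,\dots,T\}$ and real-valued random variables $(Y(a'_{1:t}) : a'_{1:t}\in\mathcal{A}_{1:t})$. Suppose that for some $a_{1:t}\in\mathcal{A}_{1:t}$, measurable $B_{0:t}\subseteq\mathcal{X}_{0:t}$ (i.e. measurable $B_s\subseteq\mathcal{X}_s$ for each $s$) and $\underline{y},\overline{y}\in\mathbb{R}$ we have $$\mathbb{P}(X_{0:t}(a_{1:t})\in B_{0:t})>0,\qquad \mathbb{P}\big(\underline{y}\le Y(a_{1:t})\le \overline{y}\ \big|\ X_{0:t}(a_{1:t})\in B_{0:t}\big)=1.$$ Define $N:=\max\{0\le s\le t : A_{1:s}=a_{1:s}\}$ and $$\underline{Y}:=\mathbb{1}(A_{1:t}=a_{1:t})\,Y(A_{1:t})+\mathbb{1}(A_{1:t}\ne a_{1:t})\,\underline{y},\qquad \overline{Y}:=\mathbb{1}(A_{1:t}=a_{1:t})\,Y(A_{1:t})+\mathbb{1}(A_{1:t}\ne a_{1:t})\,\overline{y}.$$ Then $$\mathbb{E}[\underline{Y}\mid X_{0:N}(A_{1:N})\in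 B_{0:N}]\le \mathbb{E}[Y(a_{1:t})\mid X_{0:t}(a_{1:t})\in B_{0:t}]\le \mathbb{E}[\overline{Y}\mid X_{0:N}(A_{1:N})\in B_{0:N}].$$
   Context: Notation: $z_{t:t'}=(z_t,\dots,z_{t'})$ (empty if $t>t'$); $X_{0:s}(a_{1:s})=(X_0,X_1(a_1),\dots,X_s(a_{1:s}))$; $X_{0:s}(a_{1:s})\in B_{0:s}$ means $X_0\in B_0$ and $X_r(a_{1:r})\in B_r$ for $1\le r\le s$; $Y(A_{1:t})$ and $X_{0:N}(A_{1:N})$ denote the potential outcomes evaluated at the random actions (with $N$ random); $A_{1:0}=a_{1:0}$ holds vacuously, so $N\ge0$ and $X_{0:0}(A_{1:0})=X_0$. No assumption is made on the joint dependence between the actions $A_{1:T}$ and the potential outcomes. *)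

theory Defs
  imports "HOL-Probability.Probability"
begin

text \<open>Euclidean space R^d rendered as the product measurable space of d copies of borel
  (functions on indices 0..d-1, extensional outside).\<close>
abbreviation Rspace :: "nat \<Rightarrow> (nat \<Rightarrow> real) measure" where
  "Rspace d \<equiv> PiM {..<d} (\<lambda>_. borel)"

text \<open>Action sequences a_{1:s} are lists of length s whose i-th entry (1-based) lies in Act i.\<close>
definition act_seqs :: "(nat \<Rightarrow> 'b set) \<Rightarrow> nat \<Rightarrow> 'b list set" where
  "act_seqs Act s = {as. length as = s \<and> (\<forall>i<s. as ! i \<in> Act (Suc i))}"

definition act_hist :: "(nat \<Rightarrow> 'w \<Rightarrow> 'b) \<Rightarrow> nat \<Rightarrow> 'w \<Rightarrow> 'b list" where
  "act_hist A s \<omega> = map (\<lambda>i. A i \<omega>) [1..<Suc s]"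

text \<open>Event {X_{0:s}(a_{1:s}) \<in> B_{0:s}} for a fixed action sequence a (of length \<ge> s).\<close>
definition hist_event :: "'w measure \<Rightarrow> (nat \<Rightarrow> 'b list \<Rightarrow> 'w \<Rightarrow> nat \<Rightarrow> real)
    \<Rightarrow> (nat \<Rightarrow> (nat \<Rightarrow> real) set) \<Rightarrow> nat \<Rightarrow> 'b list \<Rightarrow> 'w set" where
  "hist_event M X B s a = {\<omega> \<in> space M. \<forall>r\<le>s. X r (take r a) \<omega> \<in> B r}"

definition Nidx :: "(nat \<Rightarrow> 'w \<Rightarrow> 'b) \<Rightarrow> nat \<Rightarrow> 'b list \<Rightarrow> 'w \<Rightarrow> nat" where
  "Nidx A t a \<omega> = Max {s. s \<le> t \<and> act_hist A s \<omega> = take s a}"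

definition rand_hist_event :: "'w measure \<Rightarrow> (nat \<Rightarrow> 'b list \<Rightarrow> 'w \<Rightarrow> nat \<Rightarrow> real)
    \<Rightarrow> (nat \<Rightarrow> 'w \<Rightarrow> 'b) \<Rightarrow> (nat \<Rightarrow> (nat \<Rightarrow> real) set) \<Rightarrow> nat \<Rightarrow> 'b list \<Rightarrow> 'w set" where
  "rand_hist_event M X A B t a =
     {\<omega> \<in> space M. \<forall>r\<le>Nidx A t a \<omega>. X r (act_hist A r \<omega>) \<omega> \<in> B r}"

definition cond_prob_ev :: "'w measure \<Rightarrow> 'w set \<Rightarrow> 'w set \<Rightarrow> real" where
  "cond_prob_ev M C E = measure M (C \<inter> E) / measure M E"

definition cond_exp_ev :: "'w measure \<Rightarrow> ('w \<Rightarrow> real) \<Rightarrow> 'w set \<Rightarrow> real" where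
  "cond_exp_ev M f E = (\<integral>\<omega>. indicator E \<omega> * f \<omega> \<partial>M) / measure M E"

end

theory Submission
  imports Defs
begin

text \<open>Write E for the event X_{0:t}(a_{1:t}) \<in> B_{0:t}, F for X_{0:N}(A_{1:N}) \<in> B_{0:N}
  and G for A_{1:t} = a_{1:t}. Then E \<subseteq> F and F \<inter> G \<subseteq> E, and on F the variable \underline{Y}
  equals Y(a_{1:t}) on G and ylo off G. Let m \<ge> ylo be the mean of Y(a_{1:t}) on E. On F,
  \underline{Y} is almost surely dominated by the function that equals Y(a_{1:t}) on E and m on
  F - E, whose mean on F is again m. The upper bound follows by negation.\<close>

lemma cond_exp_ev_uminus: "cond_exp_ev M (\<lambda>\<omega>. - f \<omega>) E = - cond_exp_ev M f E"
  by (simp add: cond_exp_ev_def)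

lemma AE_cond_prob_ev_eq_1:
  assumes "finite_measure M" "C \<in> sets M" "E \<in> sets M" "cond_prob_ev M C E = 1"
  shows "AE \<omega> in M. \<omega> \<in> E \<longrightarrow> \<omega> \<in> C"
proof -
  interpret finite_measure M by fact
  have "measure M (C \<inter> E) = measure M E"
    using assms(4) by (auto simp: cond_prob_ev_def divide_eq_1_iff)
  then have "measure M (E - C) = 0"
    using finite_measure_Diff'[OF assms(3,2)] by (simp add: Int_commute)
  then have "E - C \<in> null_sets M"
    using assms(2,3) by (simp add: null_sets_def emeasure_eq_measure)
  then show ?thesis by (rule AE_I') auto
qed

context finite_measure
begin

lemma cond_exp_ev_ge_const:
  assumes "E \<in> sets M" "measure M E > 0" "integrable M (\<lambda>\<omega>. indicator E \<omega> * f \<omega>)"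
    and "AE \<omega> in M. \<omega> \<in> E \<longrightarrow> c \<le> f \<omega>"
  shows "c \<le> cond_exp_ev M f E"
proof -
  have "(\<integral>\<omega>. indicator E \<omega> * c \<partial>M) \<le> (\<integral>\<omega>. indicator E \<omega> * f \<omega> \<partial>M)"
    using assms(1,3,4)
    by (intro integral_mono_AE integrable_mult_left integrable_real_indicator)
      (auto simp: indicator_def emeasure_eq_measure)
  then show ?thesis
    using assms(1,2) by (simp add: cond_exp_ev_def field_simps mult.commute)
qed

lemma cond_exp_ev_extension_ge:
  assumes sets: "E \<in> sets M" "F \<in> sets M" "G \<in> sets M"
    and EF: "E \<subseteq> F" and FG: "F \<inter> G \<subseteq> E" and pos: "measure M E > 0"
    and int: "integrable M (\<lambda>\<omega>. indicator E \<omega> * f \<omega>)"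
    and lower: "AE \<omega> in M. \<omega> \<in> E \<longrightarrow> c \<le> f \<omega>"
    and h: "\<And>\<omega>. \<omega> \<in> F \<Longrightarrow> h \<omega> = (if \<omega> \<in> G then f \<omega> else c)"
  shows "cond_exp_ev M h F \<le> cond_exp_ev M f E"
proof -
  define m where "m = cond_exp_ev M f E"
  have "c \<le> m" unfolding m_def using sets(1) pos int lower by (rule cond_exp_ev_ge_const)
  have F_split: "measure M F = measure M E + measure M (F - E)"
    using finite_measure_Diff[OF sets(2,1) EF] by simp
  have "indicator F \<omega> * h \<omega> = indicator G \<omega> *\<^sub>R (indicator E \<omega> * f \<omega>) + indicator (F - G) \<omega> *\<^sub>R c"
    for \<omega> using EF FG h by (auto simp: indicator_def)
  then have int_h: "integrable M (\<lambda>\<omega>. indicator F \<omega> * h \<omega>)"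
    using sets int by (simp add: integrable_mult_indicator del: scaleR_conv_of_real real_scaleR_def)
  have int_dom: "integrable M (\<lambda>\<omega>. indicator E \<omega> * f \<omega> + indicator (F - E) \<omega> * m)"
    using sets int
    by (intro Bochner_Integration.integrable_add integrable_mult_left integrable_real_indicator)
      (auto simp: emeasure_eq_measure)
  have "(\<integral>\<omega>. indicator F \<omega> * h \<omega> \<partial>M) \<le> (\<integral>\<omega>. indicator E \<omega> * f \<omega> + indicator (F - E) \<omega> * m \<partial>M)"
    using lower
  proof (intro integral_mono_AE int_h int_dom, eventually_elim)
    case (elim \<omega>)
    then show ?case using EF FG h \<open>c \<le> m\<close> by (auto simp: indicator_def)
  qed
  also have "\<dots> = (\<integral>\<omega>. indicator E \<omega> * f \<omega> \<partial>M) + measure M (F - E) * m"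
    using sets int
    by (subst Bochner_Integration.integral_add) (auto simp: emeasure_eq_measure mult.commute)
  also have "\<dots> = m * measure M F"
    using pos by (simp add: m_def cond_exp_ev_def F_split field_simps)
  finally have "(\<integral>\<omega>. indicator F \<omega> * h \<omega> \<partial>M) \<le> m * measure M F" .
  moreover have "measure M F > 0" using F_split pos by (simp add: add_pos_nonneg)
  ultimately show ?thesis by (simp add: cond_exp_ev_def m_def divide_simps)
qed

lemma cond_exp_ev_extension_le:
  assumes sets: "E \<in> sets M" "F \<in> sets M" "G \<in> sets M"
    and "E \<subseteq> F" "F \<inter> G \<subseteq> E" "measure M E > 0"
    and int: "integrable M (\<lambda>\<omega>. indicator E \<omega> * f \<omega>)"
    and upper: "AE \<omega> in M. \<omega> \<in> E \<longrightarrow> f \<omega> \<le> C"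
    and h: "\<And>\<omega>. \<omega> \<in> F \<Longrightarrow> h \<omega> = (if \<omega> \<in> G then f \<omega> else C)"
  shows "cond_exp_ev M f E \<le> cond_exp_ev M h F"
proof -
  have "cond_exp_ev M (\<lambda>\<omega>. - h \<omega>) F \<le> cond_exp_ev M (\<lambda>\<omega>. - f \<omega>) E"
    using assms(1-6) by (rule cond_exp_ev_extension_ge) (use int upper h in auto)
  then show ?thesis by (simp add: cond_exp_ev_uminus)
qed

lemma cond_exp_ev_extension_bounds:
  assumes sets: "E \<in> sets M" "F \<in> sets M" "G \<in> sets M"
    and EF: "E \<subseteq> F" and FG: "F \<inter> G \<subseteq> E" and pos: "measure M E > 0"
    and f: "f \<in> borel_measurable M"
    and bounds: "AE \<omega> in M. \<omega> \<in> E \<longrightarrow> c \<le> f \<omega> \<and> f \<omega> \<le> C"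
    and h_lo: "\<And>\<omega>. \<omega> \<in> F \<Longrightarrow> h_lo \<omega> = (if \<omega> \<in> G then f \<omega> else c)"
    and h_hi: "\<And>\<omega>. \<omega> \<in> F \<Longrightarrow> h_hi \<omega> = (if \<omega> \<in> G then f \<omega> else C)"
  shows "cond_exp_ev M h_lo F \<le> cond_exp_ev M f E \<and> cond_exp_ev M f E \<le> cond_exp_ev M h_hi F"
proof -
  have int: "integrable M (\<lambda>\<omega>. indicator E \<omega> * f \<omega>)"
    using bounds sets(1) f
    by (intro integrable_const_bound[where B = "\<bar>c\<bar> + \<bar>C\<bar>"]) (auto simp: indicator_def)
  have "AE \<omega> in M. \<omega> \<in> E \<longrightarrow> c \<le> f \<omega>" "AE \<omega> in M. \<omega> \<in> E \<longrightarrow> f \<omega> \<le> C"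
    using bounds by (auto elim: AE_mp)
  then show ?thesis
    using cond_exp_ev_extension_ge[OF sets EF FG pos int _ h_lo]
      cond_exp_ev_extension_le[OF sets EF FG pos int _ h_hi] by blast
qed

end

lemma take_act_hist: "r \<le> s \<Longrightarrow> take r (act_hist A s \<omega>) = act_hist A r \<omega>"
  by (simp del: upt_Suc add: act_hist_def take_map take_upt min_def)

lemma act_hist_eq_iff:
  "act_hist A r \<omega> = as \<longleftrightarrow> length as = r \<and> (\<forall>i<r. A (Suc i) \<omega> = as ! i)"
  by (auto simp del: upt_Suc simp: list_eq_iff_nth_eq act_hist_def)

lemma Nidx_le_and_act_hist:
  "Nidx A t a \<omega> \<le> t \<and> act_hist A (Nidx A t a \<omega>) \<omega> = take (Nidx A t a \<omega>) a"
proof -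
  let ?S = "{s. s \<le> t \<and> act_hist A s \<omega> = take s a}"
  have "finite ?S" by (rule finite_subset[of _ "{..t}"]) auto
  moreover have "0 \<in> ?S" by (simp add: act_hist_def)
  ultimately have "Max ?S \<in> ?S" by (intro Max_in) auto
  then show ?thesis by (simp add: Nidx_def)
qed

lemma le_Nidx_iff:
  assumes "r \<le> t" "length a = t"
  shows "r \<le> Nidx A t a \<omega> \<longleftrightarrow> act_hist A r \<omega> = take r a"
proof
  assume "r \<le> Nidx A t a \<omega>"
  then show "act_hist A r \<omega> = take r a"
    using Nidx_le_and_act_hist[of A t a \<omega>] take_act_hist[of r "Nidx A t a \<omega>" A \<omega>]
    by (metis min.absorb1 take_take)
next
  assume "act_hist A r \<omega> = take r a"
  with assms show "r \<le> Nidx A t a \<omega>"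
    unfolding Nidx_def by (intro Max_ge) (auto intro: finite_subset[of _ "{..t}"])
qed

lemma rand_hist_event_eq:
  assumes "length a = t"
  shows "rand_hist_event M X A B t a =
    {\<omega> \<in> space M. \<forall>r\<le>t. act_hist A r \<omega> = take r a \<longrightarrow> X r (take r a) \<omega> \<in> B r}"
proof -
  have "r \<le> Nidx A t a \<omega> \<longleftrightarrow> r \<le> t \<and> act_hist A r \<omega> = take r a" for r \<omega>
    using le_Nidx_iff[OF _ assms] Nidx_le_and_act_hist[of A t a \<omega>] by (meson order.trans)
  then show ?thesis by (auto simp: rand_hist_event_def)
qed

lemma hist_event_subset_rand_hist_event:
  "length a = t \<Longrightarrow> hist_event M X B t a \<subseteq> rand_hist_event M X A B t a"
  by (auto simp: rand_hist_event_eq hist_event_def)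

lemma rand_hist_event_Int_subset_hist_event:
  "length a = t \<Longrightarrow> rand_hist_event M X A B t a \<inter> {\<omega>. act_hist A t \<omega> = a} \<subseteq> hist_event M X B t a"
  by (auto simp: rand_hist_event_eq hist_event_def take_act_hist[symmetric])

lemma sets_act_hist_eq:
  assumes "\<And>i. i \<in> {1..r} \<Longrightarrow> A i \<in> M \<rightarrow>\<^sub>M count_space UNIV"
  shows "{\<omega> \<in> space M. act_hist A r \<omega> = as} \<in> sets M"
  unfolding act_hist_eq_iff using assms by measurable

lemma sets_hist_event:
  assumes "\<And>r. r \<le> s \<Longrightarrow> X r (take r a) \<in> M \<rightarrow>\<^sub>M N r" "\<And>r. r \<le> s \<Longrightarrow> B r \<in> sets (N r)"
  shows "hist_event M X B s a \<in> sets M"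
  unfolding hist_event_def using assms by measurable

lemma sets_rand_hist_event:
  assumes "length a = t"
    and "\<And>i. i \<in> {1..t} \<Longrightarrow> A i \<in> M \<rightarrow>\<^sub>M count_space UNIV"
    and "\<And>r. r \<le> t \<Longrightarrow> X r (take r a) \<in> M \<rightarrow>\<^sub>M N r" "\<And>r. r \<le> t \<Longrightarrow> B r \<in> sets (N r)"
  shows "rand_hist_event M X A B t a \<in> sets M"
  unfolding rand_hist_event_eq[OF assms(1)] act_hist_eq_iff using assms(2-) by measurable

theorem theorem2:
  fixes M :: "'w measure"
    and T t :: nat
    and d :: "nat \<Rightarrow> nat"
    and Act :: "nat \<Rightarrow> 'b set"
    and X :: "nat \<Rightarrow> 'b list \<Rightarrow> 'w \<Rightarrow> nat \<Rightarrow> real"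
    and A :: "nat \<Rightarrow> 'w \<Rightarrow> 'b"
    and Y :: "'b list \<Rightarrow> 'w \<Rightarrow> real"
    and a :: "'b list"
    and B :: "nat \<Rightarrow> (nat \<Rightarrow> real) set"
    and ylo yhi :: real
  assumes "prob_space M"
    and "T \<ge> 1"
    and "\<And>s. s \<in> {1..T} \<Longrightarrow> finite (Act s)"
    and "\<And>s as. s \<le> T \<Longrightarrow> as \<in> act_seqs Act s \<Longrightarrow> X s as \<in> M \<rightarrow>\<^sub>M Rspace (d s)"
    and "\<And>s. s \<in> {1..T} \<Longrightarrow> A s \<in> M \<rightarrow>\<^sub>M count_space UNIV"
    and "\<And>s \<omega>. s \<in> {1..T} \<Longrightarrow> \<omega> \<in> space M \<Longrightarrow> A s \<omega> \<in> Act s"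
    and "t \<in> {1..T}"
    and "\<And>as. as \<in> act_seqs Act t \<Longrightarrow> Y as \<in> borel_measurable M"
    and "a \<in> act_seqs Act t"
    and "\<And>s. s \<le> t \<Longrightarrow> B s \<in> sets (Rspace (d s))"
    and "measure M (hist_event M X B t a) > 0"
    and "cond_prob_ev M {\<omega> \<in> space M. ylo \<le> Y a \<omega> \<and> Y a \<omega> \<le> yhi} (hist_event M X B t a) = 1"
  shows "cond_exp_ev M
           (\<lambda>\<omega>. indicator {\<omega>. act_hist A t \<omega> = a} \<omega> * Y (act_hist A t \<omega>) \<omega>
               + indicator {\<omega>. act_hist A t \<omega> \<noteq> a} \<omega> * ylo)
           (rand_hist_event M X A B t a)
         \<le> cond_exp_ev M (Y a) (hist_event M X B t a)
       \<and> cond_exp_ev M (Y a) (hist_event M X B t a)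
         \<le> cond_exp_ev M
           (\<lambda>\<omega>. indicator {\<omega>. act_hist A t \<omega> = a} \<omega> * Y (act_hist A t \<omega>) \<omega>
               + indicator {\<omega>. act_hist A t \<omega> \<noteq> a} \<omega> * yhi)
           (rand_hist_event M X A B t a)"
proof -
  interpret prob_space M by fact
  have len: "length a = t" using \<open>a \<in> act_seqs Act t\<close> by (simp add: act_seqs_def)
  have X_meas: "X r (take r a) \<in> M \<rightarrow>\<^sub>M Rspace (d r)" if "r \<le> t" for r
    using assms(7,9) that by (intro assms(4)) (auto simp: act_seqs_def)
  have A_meas: "A i \<in> M \<rightarrow>\<^sub>M count_space UNIV" if "i \<in> {1..t}" for i
    using assms(5,7) that by auto
  define E where "E = hist_event M X B t a"
  define F where "F = rand_hist_event M X A B t a"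
  define G where "G = {\<omega> \<in> space M. act_hist A t \<omega> = a}"
  have "E \<in> sets M" unfolding E_def using X_meas assms(10) by (rule sets_hist_event)
  moreover have "F \<in> sets M"
    unfolding F_def using len A_meas X_meas assms(10) by (rule sets_rand_hist_event)
  moreover have "G \<in> sets M" unfolding G_def using A_meas by (rule sets_act_hist_eq)
  ultimately have sets: "E \<in> sets M" "F \<in> sets M" "G \<in> sets M" by auto
  have EF: "E \<subseteq> F" and FG: "F \<inter> G \<subseteq> E"
    unfolding E_def F_def G_def
    using hist_event_subset_rand_hist_event[OF len, of M X B A]
      rand_hist_event_Int_subset_hist_event[OF len, of M X A B] by blast+
  have Y_meas: "Y a \<in> borel_measurable M" using assms(8,9) .
  have bounds: "AE \<omega> in M. \<omega> \<in> E \<longrightarrow> ylo \<le> Y a \<omega> \<and> Y a \<omega> \<le> yhi"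
    using AE_cond_prob_ev_eq_1[OF finite_measure_axioms _ sets(1) assms(12)[folded E_def]] Y_meas
    by auto
  have h: "indicator {\<omega>. act_hist A t \<omega> = a} \<omega> * Y (act_hist A t \<omega>) \<omega>
             + indicator {\<omega>. act_hist A t \<omega> \<noteq> a} \<omega> * y
           = (if \<omega> \<in> G then Y a \<omega> else y)" if "\<omega> \<in> F" for \<omega> y
    using that sets.sets_into_space[OF sets(2)] by (auto simp: G_def indicator_def)
  have pos: "measure M E > 0" using assms(11) by (simp add: E_def)
  show ?thesis
    using cond_exp_ev_extension_bounds[OF sets EF FG pos Y_meas bounds h h] by (simp add: E_def F_def)
qed

end
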